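(* Let $\mathcal H\subseteq\mathcal Y^{\mathcal X}$, $S\in\mathcal X^n$. Then $\mathsf{Hall}^{\mathrm{ag}}(G_{\mathrm{ag}}(\mathcal H|_S))$ is the greatest (supremum) $\alpha$ for which $G_{\mathrm{ag}}(\mathcal H|_S)$ is $\alpha$-agnostic-orientable, where orientations may be randomized (fractional).
   Context: For $S=(x_1,\dots,x_n)$ and $v\in\mathcal Y^n$, $\|v-\mathcal H\|_0=\min_{h\in\mathcal H}|\{i:h(x_i)\ne v_i\}|$. The agnostic one-inclusion graph $G_{\mathrm{ag}}(\mathcal H|_S)=(V,E)$ has $V=\mathcal Y^n$ and one edge for each $i\in[n]$ and each labeling $e$ of the coordinates other than $i$, incident to all $v$ agreeing with $e$ off coordinate $i$. A randomized (fractional) orientation assigns each edge a probability distribution over its incident vertices; indegree = total amount received. $G_{\mathrm{ag}}(\mathcal H|_S)$ is $\alpha$-agnostic-orientable if some such orientation gives every vertex $v$ indegree $\ge\alpha-\|v-\mathcal H\|_0$. For $U\subseteq V$, $E[U]$ is the set of edges with an incident node in $U$, and $\mathsf{Hall}^{\mathrm{ag}}(G_{\mathrm{ag}}(\mathcal H|_S))=\inf\big\{\big(|E[U]|+\sum_{u\in U}\|u-\mathcal H\|_0\big)/|U|: U\subseteq V, 0<|U|<\infty\big\}$. *)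

theory Defs
  imports "HOL-Probability.Probability_Mass_Function"
begin

definition restrict_to :: "('x \<Rightarrow> 'y) set \<Rightarrow> 'x list \<Rightarrow> 'y list set" where
  "restrict_to H S = (\<lambda>h. map h S) ` H"

definition dist_to_class :: "('x \<Rightarrow> 'y) set \<Rightarrow> 'x list \<Rightarrow> 'y list \<Rightarrow> nat" where
  "dist_to_class H S v =
     Min ((\<lambda>w. card {i. i < length S \<and> w ! i \<noteq> v ! i}) ` restrict_to H S)"

definition ag_vertices :: "nat \<Rightarrow> 'y list set" where
  "ag_vertices n = {v. length v = n}"

definition del_at :: "nat \<Rightarrow> 'y list \<Rightarrow> 'y list" where
  "del_at i v = take i v @ drop (Suc i) v"

text \<open>Edges are pairs (i,e), i < n, e a labeling of the coordinates other than i;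
  edge (i,e) is incident to exactly those v with del_at i v = e.\<close>
definition ag_edges :: "nat \<Rightarrow> (nat \<times> 'y list) set" where
  "ag_edges n = {(i, e). i < n \<and> length e = n - 1}"

definition incident :: "nat \<times> 'y list \<Rightarrow> 'y list \<Rightarrow> bool" where
  "incident ed v = (fst ed < length v \<and> del_at (fst ed) v = snd ed)"

definition edges_of :: "nat \<Rightarrow> 'y list set \<Rightarrow> (nat \<times> 'y list) set" where
  "edges_of n U = {ed \<in> ag_edges n. \<exists>u \<in> U. incident ed u}"

definition Hall_ag :: "('x \<Rightarrow> 'y) set \<Rightarrow> 'x list \<Rightarrow> real" where
  "Hall_ag H S = Inf {(real (card (edges_of (length S) U))
                        + (\<Sum>u\<in>U. real (dist_to_class H S u))) / real (card U)
                      | U. U \<subseteq> ag_vertices (length S) \<and> finite U \<and> U \<noteq> {}}"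

text \<open>A randomized orientation: each edge (i,e) gets a probability distribution over
  its incident vertices. The incident vertices of (i,e) are in bijection with the
  label y placed at coordinate i, so the distribution is a pmf over 'y.\<close>
definition indegree :: "nat \<Rightarrow> (nat \<Rightarrow> 'y list \<Rightarrow> 'y pmf) \<Rightarrow> 'y list \<Rightarrow> real" where
  "indegree n ori v = (\<Sum>i<n. pmf (ori i (del_at i v)) (v ! i))"

definition ag_orientable :: "('x \<Rightarrow> 'y) set \<Rightarrow> 'x list \<Rightarrow> real \<Rightarrow> bool" where
  "ag_orientable H S \<alpha> =
     (\<exists>ori :: nat \<Rightarrow> 'y list \<Rightarrow> 'y pmf. \<forall>v \<in> ag_vertices (length S).
        indegree (length S) ori v \<ge> \<alpha> - real (dist_to_class H S v))"

end

theory Submission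
  imports Defs
begin

(* Both inequalities are double counting.  An edge hands out total mass at most 1, so the
   indegrees of a finite vertex set U sum to at most |E[U]|; hence every alpha for which the graph
   is alpha-agnostic-orientable is at most the Hall ratio of every U.  Conversely, for rational
   alpha = a/q not exceeding any Hall ratio, blow each vertex v up into a - q * dist(v) copies (if
   positive) and each edge into q slots, a copy of v being adjacent to the slots of the n edges
   through v.  The Hall ratio bound is exactly Hall's marriage condition for this bipartite graph,
   which may have infinitely many copies but has finite neighbourhoods; reading the matching as
   the uniform distribution over the labels assigned to the q slots of an edge gives an
   orientation witnessing alpha.  Density of the rationals then gives the supremum. *)

definition hall_condition :: "'i set \<Rightarrow> ('i \<times> 'b) set \<Rightarrow> bool" where
  "hall_condition I R \<longleftrightarrow> (\<forall>J\<subseteq>I. finite J \<longrightarrow> card J \<le> card (R `` J))"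

lemma hall_conditionD:
  "hall_condition I R \<Longrightarrow> J \<subseteq> I \<Longrightarrow> finite J \<Longrightarrow> card J \<le> card (R `` J)"
  unfolding hall_condition_def by blast

lemma finite_Image_Sigma:
  assumes "\<forall>i\<in>I. finite (A i)" "R \<subseteq> Sigma I A" "finite J" "J \<subseteq> I"
  shows "finite (R `` J)"
proof (rule finite_subset)
  show "R `` J \<subseteq> \<Union>(A ` J)" using assms(2,4) by blast
  show "finite (\<Union>(A ` J))" using assms(1,3,4) by blast
qed

text \<open>Only the finitely many pairs of \<open>Sigma J A\<close> matter for the Hall inequality of \<open>J\<close>, and
  these are removed by a single member of the chain.\<close>
lemma hall_condition_Diff_Union_chain:
  assumes fin: "\<forall>i\<in>I. finite (A i)"
    and chain: "subset.chain {X. hall_condition I (Sigma I A - X)} C" and "C \<noteq> {}"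
  shows "hall_condition I (Sigma I A - \<Union>C)"
  unfolding hall_condition_def
proof (intro allI impI)
  fix J assume J: "J \<subseteq> I" "finite J"
  define K where "K = Sigma J A"
  have "finite K" using J fin unfolding K_def by auto
  then obtain X where X: "X \<in> C" "K \<inter> \<Union>C \<subseteq> X"
    using finite_subset_Union_chain[of "K \<inter> \<Union>C" C] chain \<open>C \<noteq> {}\<close> by blast
  have "hall_condition I (Sigma I A - X)" using X(1) chain unfolding subset_chain_def by blast
  moreover have "(Sigma I A - \<Union>C) `` J = (Sigma I A - X) `` J"
  proof (intro equalityI subsetI)
    fix b assume "b \<in> (Sigma I A - \<Union>C) `` J"
    then obtain j where "j \<in> J" "(j, b) \<in> Sigma I A" "(j, b) \<notin> \<Union>C" by blast
    with X(1) show "b \<in> (Sigma I A - X) `` J" by blast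
  next
    fix b assume "b \<in> (Sigma I A - X) `` J"
    then obtain j where "j \<in> J" "(j, b) \<in> Sigma I A" "(j, b) \<notin> X" by blast
    with X(2) show "b \<in> (Sigma I A - \<Union>C) `` J" unfolding K_def by blast
  qed
  ultimately show "card J \<le> card ((Sigma I A - \<Union>C) `` J)"
    using J by (simp add: hall_conditionD)
qed

lemma minimal_hall_subrelation_exists:
  assumes fin: "\<forall>i\<in>I. finite (A i)" and hall: "hall_condition I (Sigma I A)"
  obtains R where "R \<subseteq> Sigma I A" "hall_condition I R"
    "\<And>R'. R' \<subseteq> R \<Longrightarrow> hall_condition I R' \<Longrightarrow> R' = R"
proof -
  define T where "T = Sigma I A"
  \<comment> \<open>Zorn's lemma is applied to the complements \<open>T - R\<close>, for which chains have upper bounds.\<close>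
  have "\<exists>M\<in>{X. hall_condition I (T - X)}. \<forall>X\<in>{X. hall_condition I (T - X)}. M \<subseteq> X \<longrightarrow> X = M"
  proof (rule subset_Zorn')
    fix C assume C: "subset.chain {X. hall_condition I (T - X)} C"
    show "\<Union>C \<in> {X. hall_condition I (T - X)}"
    proof (cases "C = {}")
      case True thus ?thesis using hall unfolding T_def by simp
    next
      case False thus ?thesis using hall_condition_Diff_Union_chain[OF fin] C unfolding T_def by simp
    qed
  qed
  then obtain M where M: "hall_condition I (T - M)"
    and max: "\<And>X. hall_condition I (T - X) \<Longrightarrow> M \<subseteq> X \<Longrightarrow> X = M"
    by blast
  show thesis
  proof (rule that)
    show "T - M \<subseteq> Sigma I A" "hall_condition I (T - M)" using M unfolding T_def by auto
    fix R' assume R': "R' \<subseteq> T - M" "hall_condition I R'"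
    hence "T - (M \<union> (T - R')) = R'" unfolding T_def by blast
    hence "M \<union> (T - R') = M" using R' by (intro max) auto
    thus "R' = T - M" using R'(1) by blast
  qed
qed

lemma critical_set_if_not_hall_condition_Diff:
  assumes fin: "\<forall>i\<in>I. finite (A i)" and RS: "R \<subseteq> Sigma I A"
    and hall: "hall_condition I R" and not_hall: "\<not> hall_condition I (R - {(i, z)})"
  obtains K where "K \<subseteq> I" "finite K" "i \<notin> K" "card (R `` K \<union> (R `` {i} - {z})) \<le> card K"
proof -
  obtain J where J: "J \<subseteq> I" "finite J" "card ((R - {(i, z)}) `` J) < card J"
    using not_hall unfolding hall_condition_def by auto
  have "i \<in> J"
  proof (rule ccontr)
    assume "i \<notin> J"
    hence "(R - {(i, z)}) `` J = R `` J" by blast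
    thus False using J hall_conditionD[OF hall J(1,2)] by simp
  qed
  have "finite ((R - {(i, z)}) `` J)"
    using finite_Image_Sigma[OF fin _ J(2,1)] RS by blast
  moreover have "R `` (J - {i}) \<union> (R `` {i} - {z}) \<subseteq> (R - {(i, z)}) `` J"
    using \<open>i \<in> J\<close> by blast
  ultimately have "card (R `` (J - {i}) \<union> (R `` {i} - {z})) < card J"
    using J(3) by (meson card_mono le_less_trans)
  moreover have "card J = Suc (card (J - {i}))"
    using J(2) \<open>i \<in> J\<close> by (rule card.remove)
  ultimately show thesis using J by (intro that[of "J - {i}"]) auto
qed

text \<open>The argument of Halmos and Vaughan: if \<open>i\<close> kept two neighbours \<open>x \<noteq> y\<close>, the critical
  sets \<open>K\<^sub>1\<close>, \<open>K\<^sub>2\<close> obtained by deleting either pair contradict the submodularity of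
  \<open>K \<mapsto> card (R `` K)\<close> on \<open>insert i (K\<^sub>1 \<union> K\<^sub>2)\<close> and \<open>K\<^sub>1 \<inter> K\<^sub>2\<close>.\<close>
lemma minimal_hall_relation_single_valued:
  assumes fin: "\<forall>i\<in>I. finite (A i)" and RS: "R \<subseteq> Sigma I A" and hall: "hall_condition I R"
    and minimal: "\<And>R'. R' \<subseteq> R \<Longrightarrow> hall_condition I R' \<Longrightarrow> R' = R"
    and x: "(i, x) \<in> R" and y: "(i, y) \<in> R"
  shows "x = y"
proof (rule ccontr)
  assume "x \<noteq> y"
  have iI: "i \<in> I" using x RS by blast
  have not_hall: "\<not> hall_condition I (R - {(i, z)})" if "(i, z) \<in> R" for z
    using minimal[of "R - {(i, z)}"] that by blast
  obtain K1 where
    K1: "K1 \<subseteq> I" "finite K1" "i \<notin> K1" "card (R `` K1 \<union> (R `` {i} - {x})) \<le> card K1"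
    using critical_set_if_not_hall_condition_Diff[OF fin RS hall not_hall[OF x]] .
  obtain K2 where
    K2: "K2 \<subseteq> I" "finite K2" "i \<notin> K2" "card (R `` K2 \<union> (R `` {i} - {y})) \<le> card K2"
    using critical_set_if_not_hall_condition_Diff[OF fin RS hall not_hall[OF y]] .
  define S1 where "S1 = R `` K1 \<union> (R `` {i} - {x})"
  define S2 where "S2 = R `` K2 \<union> (R `` {i} - {y})"
  have "finite (R `` K1)" "finite (R `` K2)" "finite (R `` {i})"
    using finite_Image_Sigma[OF fin RS] K1 K2 iI by auto
  hence fin_S: "finite S1" "finite S2" unfolding S1_def S2_def by auto
  have "card (insert i (K1 \<union> K2)) \<le> card (R `` insert i (K1 \<union> K2))"
    using K1 K2 iI by (intro hall_conditionD[OF hall]) auto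
  also have "\<dots> \<le> card (S1 \<union> S2)"
    using fin_S \<open>x \<noteq> y\<close> unfolding S1_def S2_def by (intro card_mono) auto
  finally have union: "card (K1 \<union> K2) + 1 \<le> card (S1 \<union> S2)"
    using K1 K2 by simp
  have "card (K1 \<inter> K2) \<le> card (R `` (K1 \<inter> K2))"
    using K1 by (intro hall_conditionD[OF hall]) auto
  also have "\<dots> \<le> card (S1 \<inter> S2)"
    using fin_S unfolding S1_def S2_def by (intro card_mono) auto
  finally have inter: "card (K1 \<inter> K2) \<le> card (S1 \<inter> S2)" .
  have "card (K1 \<union> K2) + card (K1 \<inter> K2) = card K1 + card K2"
    using K1(2) K2(2) by (rule card_Un_Int[symmetric])
  moreover have "card (S1 \<union> S2) + card (S1 \<inter> S2) = card S1 + card S2"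
    using fin_S by (rule card_Un_Int[symmetric])
  ultimately show False
    using union inter K1(4) K2(4) unfolding S1_def S2_def by linarith
qed

lemma minimal_hall_relation_Image_singleton:
  assumes fin: "\<forall>i\<in>I. finite (A i)" and RS: "R \<subseteq> Sigma I A" and hall: "hall_condition I R"
    and minimal: "\<And>R'. R' \<subseteq> R \<Longrightarrow> hall_condition I R' \<Longrightarrow> R' = R"
    and "i \<in> I"
  shows "R `` {i} = {the_elem (R `` {i})}"
proof -
  have "card {i} \<le> card (R `` {i})"
    using \<open>i \<in> I\<close> by (intro hall_conditionD[OF hall]) auto
  hence "R `` {i} \<noteq> {}" by auto
  then obtain x where x: "x \<in> R `` {i}" by blast
  have "y = x" if "y \<in> R `` {i}" for y
    using minimal_hall_relation_single_valued[OF fin RS hall minimal] that x by blast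
  hence "R `` {i} = {x}" using x by blast
  thus ?thesis by simp
qed

theorem hall_marriage:
  assumes fin: "\<forall>i\<in>I. finite (A i)"
    and hall: "\<forall>J\<subseteq>I. finite J \<longrightarrow> card J \<le> card (\<Union>(A ` J))"
  obtains f where "inj_on f I" "\<forall>i\<in>I. f i \<in> A i"
proof -
  have "hall_condition I (Sigma I A)"
    unfolding hall_condition_def
  proof (intro allI impI)
    fix J assume J: "J \<subseteq> I" "finite J"
    hence "card J \<le> card (\<Union>(A ` J))" using hall by blast
    also have "\<Union>(A ` J) = Sigma I A `` J" using J(1) by blast
    finally show "card J \<le> card (Sigma I A `` J)" .
  qed
  then obtain R where RS: "R \<subseteq> Sigma I A" and hall_R: "hall_condition I R"
    and minimal: "\<And>R'. R' \<subseteq> R \<Longrightarrow> hall_condition I R' \<Longrightarrow> R' = R"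
    using minimal_hall_subrelation_exists[OF fin] by metis
  define f where "f i = the_elem (R `` {i})" for i
  have single: "R `` {i} = {f i}" if "i \<in> I" for i
    unfolding f_def using minimal_hall_relation_Image_singleton[OF fin RS hall_R minimal that] .
  show thesis
  proof (rule that)
    show "inj_on f I"
    proof (rule inj_onI)
      fix i j assume ij: "i \<in> I" "j \<in> I" "f i = f j"
      have "card {i, j} \<le> card (R `` {i, j})"
        using ij by (intro hall_conditionD[OF hall_R]) auto
      also have "R `` {i, j} = R `` {i} \<union> R `` {j}" by blast
      also have "\<dots> = {f i}" using single[OF ij(1)] single[OF ij(2)] ij(3) by simp
      finally have "card {i, j} \<le> 1" by simp
      thus "i = j" by (rule contrapos_pp) simp
    qed
    show "\<forall>i\<in>I. f i \<in> A i"
    proof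
      fix i assume "i \<in> I"
      hence "(i, f i) \<in> R" using single by blast
      thus "f i \<in> A i" using RS by blast
    qed
  qed
qed

lemma length_del_at: "i < length v \<Longrightarrow> length (del_at i v) = length v - 1"
  unfolding del_at_def by simp

lemma del_at_nth_inject:
  assumes "length u = length v" "i < length u" "del_at i u = del_at i v" "u ! i = v ! i"
  shows "u = v"
proof -
  have "take i u = take i v" "drop (Suc i) u = drop (Suc i) v"
    using assms(1-3) unfolding del_at_def by (metis append_eq_append_conv length_take)+
  thus ?thesis using assms(1,2,4) by (metis id_take_nth_drop)
qed

lemma inj_on_nth_del_at_fiber:
  assumes "U \<subseteq> ag_vertices n" "i < n"
  shows "inj_on (\<lambda>u. u ! i) {u\<in>U. del_at i u = e}"
proof (rule inj_onI)
  fix u v assume "u \<in> {u\<in>U. del_at i u = e}" "v \<in> {u\<in>U. del_at i u = e}" "u ! i = v ! i"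
  thus "u = v" using assms by (intro del_at_nth_inject[of u v i]) (auto simp: ag_vertices_def)
qed

lemma edges_of_eq_Sigma:
  assumes "U \<subseteq> ag_vertices n"
  shows "edges_of n U = Sigma {..<n} (\<lambda>i. del_at i ` U)"
  using assms unfolding edges_of_def ag_edges_def ag_vertices_def incident_def
  by (fastforce simp: length_del_at)

lemma card_edges_of:
  assumes "U \<subseteq> ag_vertices n" "finite U"
  shows "card (edges_of n U) = (\<Sum>i<n. card (del_at i ` U))"
  using assms by (simp add: edges_of_eq_Sigma)

lemma finite_edges_of: "U \<subseteq> ag_vertices n \<Longrightarrow> finite U \<Longrightarrow> finite (edges_of n U)"
  by (simp add: edges_of_eq_Sigma)

lemma edges_of_mono: "U' \<subseteq> U \<Longrightarrow> edges_of n U' \<subseteq> edges_of n U"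
  unfolding edges_of_def by blast

lemma sum_pmf_inj_le_1:
  assumes "inj_on g A" "finite A"
  shows "(\<Sum>x\<in>A. pmf p (g x)) \<le> 1"
proof -
  have "(\<Sum>x\<in>A. pmf p (g x)) = measure (measure_pmf p) (g ` A)"
    using assms by (simp add: measure_measure_pmf_finite sum.reindex)
  also have "\<dots> \<le> 1" by (rule measure_pmf.subprob_measure_le_1)
  finally show ?thesis .
qed

lemma sum_indegree_le_card_edges_of:
  assumes U: "U \<subseteq> ag_vertices n" "finite U"
  shows "(\<Sum>u\<in>U. indegree n ori u) \<le> card (edges_of n U)"
proof -
  have along: "(\<Sum>u\<in>U. pmf (ori i (del_at i u)) (u ! i)) \<le> card (del_at i ` U)" if "i < n" for i
  proof -
    have "(\<Sum>u\<in>U. pmf (ori i (del_at i u)) (u ! i))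
        = (\<Sum>e\<in>del_at i ` U. \<Sum>u\<in>{u\<in>U. del_at i u = e}. pmf (ori i (del_at i u)) (u ! i))"
      using U(2) by (rule sum.image_gen)
    also have "\<dots> = (\<Sum>e\<in>del_at i ` U. \<Sum>u\<in>{u\<in>U. del_at i u = e}. pmf (ori i e) (u ! i))"
      by (intro sum.cong refl) simp
    also have "\<dots> \<le> (\<Sum>e\<in>del_at i ` U. 1)"
      using U inj_on_nth_del_at_fiber[OF U(1) \<open>i < n\<close>] by (intro sum_mono sum_pmf_inj_le_1) auto
    finally show ?thesis by simp
  qed
  have "(\<Sum>u\<in>U. indegree n ori u) = (\<Sum>i<n. \<Sum>u\<in>U. pmf (ori i (del_at i u)) (u ! i))"
    unfolding indegree_def by (rule sum.swap)
  also have "\<dots> \<le> (\<Sum>i<n. real (card (del_at i ` U)))"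
    using along by (rule sum_mono) simp
  also have "\<dots> = card (edges_of n U)"
    using card_edges_of[OF U] by simp
  finally show ?thesis .
qed

definition hall_ratio :: "('x \<Rightarrow> 'y) set \<Rightarrow> 'x list \<Rightarrow> 'y list set \<Rightarrow> real" where
  "hall_ratio H S U = (real (card (edges_of (length S) U))
                        + (\<Sum>u\<in>U. real (dist_to_class H S u))) / real (card U)"

lemma hall_ratio_nonneg: "0 \<le> hall_ratio H S U"
  unfolding hall_ratio_def by (intro divide_nonneg_nonneg add_nonneg_nonneg sum_nonneg) auto

lemma le_Hall_ag_iff:
  fixes H :: "('x \<Rightarrow> 'y) set"
  shows "\<alpha> \<le> Hall_ag H S \<longleftrightarrow>
     (\<forall>U. U \<subseteq> ag_vertices (length S) \<longrightarrow> finite U \<longrightarrow> U \<noteq> {} \<longrightarrow> \<alpha> \<le> hall_ratio H S U)"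
proof -
  define \<U> where "\<U> = {U. U \<subseteq> (ag_vertices (length S) :: 'y list set) \<and> finite U \<and> U \<noteq> {}}"
  have Hall: "Hall_ag H S = Inf (hall_ratio H S ` \<U>)"
    unfolding Hall_ag_def hall_ratio_def \<U>_def by (simp add: setcompr_eq_image)
  have "{replicate (length S) undefined} \<in> \<U>" unfolding \<U>_def ag_vertices_def by simp
  hence ne: "hall_ratio H S ` \<U> \<noteq> {}" by blast
  have bdd: "bdd_below (hall_ratio H S ` \<U>)"
    by (rule bdd_belowI2[where m = 0]) (rule hall_ratio_nonneg)
  have "\<alpha> \<le> Hall_ag H S \<longleftrightarrow> (\<forall>U\<in>\<U>. \<alpha> \<le> hall_ratio H S U)"
    unfolding Hall le_cInf_iff[OF ne bdd] by simp
  thus ?thesis unfolding \<U>_def by blast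
qed

lemma ag_orientable_le_Hall_ag:
  assumes "ag_orientable H S \<alpha>"
  shows "\<alpha> \<le> Hall_ag H S"
proof -
  obtain ori where ori: "\<forall>v \<in> ag_vertices (length S).
      \<alpha> - real (dist_to_class H S v) \<le> indegree (length S) ori v"
    using assms unfolding ag_orientable_def by blast
  have "\<alpha> \<le> hall_ratio H S U" if U: "U \<subseteq> ag_vertices (length S)" "finite U" "U \<noteq> {}" for U
  proof -
    have "real (card U) * \<alpha> - (\<Sum>u\<in>U. real (dist_to_class H S u))
        = (\<Sum>u\<in>U. \<alpha> - real (dist_to_class H S u))"
      by (simp add: sum_subtractf)
    also have "\<dots> \<le> (\<Sum>u\<in>U. indegree (length S) ori u)"
      using U(1) ori by (intro sum_mono) auto
    also have "\<dots> \<le> card (edges_of (length S) U)"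
      using U(1,2) by (rule sum_indegree_le_card_edges_of)
    finally have "\<alpha> * real (card U) \<le> card (edges_of (length S) U) + (\<Sum>u\<in>U. real (dist_to_class H S u))"
      by (simp add: mult.commute)
    moreover have "0 < real (card U)" using U(2,3) by (simp add: card_gt_0_iff)
    ultimately show ?thesis unfolding hall_ratio_def by (simp add: pos_le_divide_eq)
  qed
  thus ?thesis unfolding le_Hall_ag_iff by blast
qed

lemma pmf_pmf_of_multiset_map_upt:
  assumes "q > 0"
  shows "pmf (pmf_of_multiset (mset (map g [0..<q]))) y = card {j. j < q \<and> g j = y} / q"
proof -
  have "map g [0..<q] \<noteq> []" using assms by simp
  hence "mset (map g [0..<q]) \<noteq> {#}" by (simp only: mset_zero_iff) simp
  moreover have "count (mset (map g [0..<q])) y = card {j. j < q \<and> g j = y}"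
    unfolding count_mset count_list_eq_length_filter length_filter_conv_card
    by (intro arg_cong[where f = card]) auto
  ultimately show ?thesis by simp
qed

lemma indegree_pmf_of_multiset_labels:
  assumes "q > 0"
  shows "indegree n (\<lambda>i e. pmf_of_multiset (mset (map (lab i e) [0..<q]))) v
       = card (SIGMA i:{..<n}. {j. j < q \<and> lab i (del_at i v) j = v ! i}) / q"
proof -
  have "indegree n (\<lambda>i e. pmf_of_multiset (mset (map (lab i e) [0..<q]))) v
      = (\<Sum>i<n. card {j. j < q \<and> lab i (del_at i v) j = v ! i} / q)"
    unfolding indegree_def using assms by (intro sum.cong refl pmf_pmf_of_multiset_map_upt)
  also have "\<dots> = card (SIGMA i:{..<n}. {j. j < q \<and> lab i (del_at i v) j = v ! i}) / q"
    by (simp add: sum_divide_distrib)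
  finally show ?thesis .
qed

text \<open>Each edge \<open>(i, e)\<close> is split into \<open>q\<close> slots \<open>((i, e), j)\<close>, \<open>j < q\<close>; the slots adjacent to
  the vertex \<open>v\<close> are those of the \<open>n\<close> edges through \<open>v\<close>.\<close>
definition edge_slot :: "'y list \<Rightarrow> nat \<times> nat \<Rightarrow> (nat \<times> 'y list) \<times> nat" where
  "edge_slot v = (\<lambda>(i, j). ((i, del_at i v), j))"

lemma UN_edge_slot_eq:
  assumes "U \<subseteq> ag_vertices n"
  shows "(\<Union>v\<in>U. edge_slot v ` ({..<n} \<times> {..<q})) = edges_of n U \<times> {..<q}"
  using assms by (auto simp: edges_of_eq_Sigma edge_slot_def)

lemma slot_assignment_exists:
  fixes d :: "'y list \<Rightarrow> nat"
  assumes demand: "\<And>U. U \<subseteq> ag_vertices n \<Longrightarrow> finite U \<Longrightarrow> (\<Sum>u\<in>U. d u) \<le> q * card (edges_of n U)"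
  obtains f where "inj_on f (SIGMA v:ag_vertices n. {..<d v})"
    "\<And>v k. v \<in> ag_vertices n \<Longrightarrow> k < d v \<Longrightarrow> f (v, k) \<in> edge_slot v ` ({..<n} \<times> {..<q})"
proof -
  define I where "I = (SIGMA v:ag_vertices n. {..<d v})"
  define A where "A c = edge_slot (fst c) ` ({..<n} \<times> {..<q})" for c :: "'y list \<times> nat"
  have "\<forall>J\<subseteq>I. finite J \<longrightarrow> card J \<le> card (\<Union>(A ` J))"
  proof (intro allI impI)
    fix J assume J: "J \<subseteq> I" "finite J"
    define U where "U = fst ` J"
    have U: "U \<subseteq> ag_vertices n" "finite U" using J unfolding U_def I_def by auto
    have "J \<subseteq> (SIGMA u:U. {..<d u})" using J(1) unfolding U_def I_def by force
    hence "card J \<le> card (SIGMA u:U. {..<d u})" using U(2) by (intro card_mono) auto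
    also have "\<dots> = (\<Sum>u\<in>U. d u)" using U(2) by simp
    also have "\<dots> \<le> q * card (edges_of n U)" using U by (rule demand)
    also have "\<dots> = card (edges_of n U \<times> {..<q})" by (simp add: card_cartesian_product)
    also have "edges_of n U \<times> {..<q} = (\<Union>v\<in>U. edge_slot v ` ({..<n} \<times> {..<q}))"
      by (rule UN_edge_slot_eq[OF U(1), symmetric])
    also have "\<dots> = \<Union>(A ` J)" unfolding U_def A_def by (simp add: image_image)
    finally show "card J \<le> card (\<Union>(A ` J))" .
  qed
  moreover have "\<forall>c\<in>I. finite (A c)" unfolding A_def by simp
  ultimately obtain f where "inj_on f I" "\<forall>c\<in>I. f c \<in> A c"
    using hall_marriage by metis
  thus thesis using that unfolding I_def A_def by auto
qed

lemma exists_orientation_indegree_ge_demand: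
  fixes d :: "'y list \<Rightarrow> nat"
  assumes "q > 0"
    and demand: "\<And>U. U \<subseteq> ag_vertices n \<Longrightarrow> finite U \<Longrightarrow> (\<Sum>u\<in>U. d u) \<le> q * card (edges_of n U)"
  shows "\<exists>ori. \<forall>v\<in>ag_vertices n. real (d v) / real q \<le> indegree n ori v"
proof -
  define I where "I = (SIGMA v:ag_vertices n. {..<d v})"
  obtain f where f_inj: "inj_on f I"
    and f_slot: "\<And>v k. v \<in> ag_vertices n \<Longrightarrow> k < d v \<Longrightarrow> f (v, k) \<in> edge_slot v ` ({..<n} \<times> {..<q})"
    using slot_assignment_exists[OF demand] unfolding I_def by metis
  \<comment> \<open>A slot matched to a copy of \<open>v\<close> carries the label \<open>v ! i\<close>; unmatched slots carry junk.\<close>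
  define lab where "lab i e j = fst (inv_into I f ((i, e), j)) ! i" for i e j
  have "real (d v) / real q \<le> indegree n (\<lambda>i e. pmf_of_multiset (mset (map (lab i e) [0..<q]))) v"
    if v: "v \<in> ag_vertices n" for v
  proof -
    define T where "T = (SIGMA i:{..<n}. {j. j < q \<and> lab i (del_at i v) j = v ! i})"
    have "finite T" unfolding T_def by simp
    have "f ` ({v} \<times> {..<d v}) \<subseteq> edge_slot v ` T"
    proof
      fix s assume "s \<in> f ` ({v} \<times> {..<d v})"
      then obtain k where k: "k < d v" "s = f (v, k)" by blast
      then obtain i j where ij: "i < n" "j < q" "s = edge_slot v (i, j)"
        using f_slot[OF v k(1)] by blast
      have "(v, k) \<in> I" using v k(1) unfolding I_def by simp
      moreover have "((i, del_at i v), j) = f (v, k)" using ij(3) k(2) unfolding edge_slot_def by simp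
      ultimately have "inv_into I f ((i, del_at i v), j) = (v, k)" using f_inj by simp
      hence "lab i (del_at i v) j = v ! i" unfolding lab_def by simp
      thus "s \<in> edge_slot v ` T" using ij unfolding T_def by blast
    qed
    have "{v} \<times> {..<d v} \<subseteq> I" using v unfolding I_def by blast
    hence "d v = card (f ` ({v} \<times> {..<d v}))"
      using f_inj by (simp add: card_image inj_on_subset card_cartesian_product)
    also have "\<dots> \<le> card (edge_slot v ` T)"
      using \<open>finite T\<close> \<open>f ` ({v} \<times> {..<d v}) \<subseteq> edge_slot v ` T\<close> by (intro card_mono) auto
    also have "\<dots> \<le> card T" using \<open>finite T\<close> by (rule card_image_le)
    finally have "d v \<le> card T" .
    thus ?thesis
      unfolding indegree_pmf_of_multiset_labels[OF \<open>q > 0\<close>] T_def[symmetric]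
      by (simp add: divide_right_mono)
  qed
  thus ?thesis by blast
qed

lemma sum_demand_le_card_edges_of:
  fixes a :: int and q :: nat
  assumes "q > 0"
    and ratio: "\<And>U. U \<subseteq> ag_vertices (length S) \<Longrightarrow> finite U \<Longrightarrow> U \<noteq> {} \<Longrightarrow>
                  real_of_int a / real q \<le> hall_ratio H S U"
    and U: "U \<subseteq> ag_vertices (length S)" "finite U"
  shows "(\<Sum>u\<in>U. nat (a - int q * int (dist_to_class H S u))) \<le> q * card (edges_of (length S) U)"
proof -
  define w where "w u = dist_to_class H S u" for u
  define U' where "U' = {u\<in>U. 0 < a - int q * int (w u)}"
  have "U' \<subseteq> U" "finite U'" using U(2) unfolding U'_def by auto
  have "(\<Sum>u\<in>U. nat (a - int q * int (w u))) = (\<Sum>u\<in>U'. nat (a - int q * int (w u)))"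
    using U(2) by (intro sum.mono_neutral_right) (auto simp: U'_def)
  also have "\<dots> \<le> q * card (edges_of (length S) U)"
  proof (cases "U' = {}")
    case False
    have pos: "0 < real (card U')" using \<open>finite U'\<close> False by (simp add: card_gt_0_iff)
    have "real_of_int a / real q \<le> hall_ratio H S U'"
      using ratio \<open>U' \<subseteq> U\<close> U \<open>finite U'\<close> False by blast
    hence le: "real_of_int a * card U' \<le> q * (card (edges_of (length S) U') + (\<Sum>u\<in>U'. real (w u)))"
      using pos \<open>q > 0\<close> unfolding hall_ratio_def w_def by (simp add: field_simps)
    have "real (\<Sum>u\<in>U'. nat (a - int q * int (w u)))
        = real_of_int a * card U' - q * (\<Sum>u\<in>U'. real (w u))"
      unfolding of_nat_sum by (simp add: U'_def sum_subtractf sum_distrib_left)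
    also have "\<dots> \<le> real q * card (edges_of (length S) U')"
      using le by (simp add: algebra_simps)
    also have "\<dots> \<le> real q * card (edges_of (length S) U)"
      using card_mono[OF finite_edges_of[OF U] edges_of_mono[OF \<open>U' \<subseteq> U\<close>]]
      by (intro mult_left_mono) simp_all
    finally have "real (\<Sum>u\<in>U'. nat (a - int q * int (w u))) \<le> real (q * card (edges_of (length S) U))"
      by simp
    thus ?thesis by (simp only: of_nat_le_iff)
  qed simp
  finally show ?thesis unfolding w_def .
qed

lemma of_int_le_real_nat: "real_of_int z \<le> real (nat z)"
proof -
  have "real_of_int z \<le> real_of_int (int (nat z))" by (simp only: of_int_le_iff)
  thus ?thesis by (simp only: of_int_of_nat_eq)
qed

lemma ag_orientable_if_rational_le_Hall_ag:
  assumes "\<alpha> \<in> \<rat>" and "\<alpha> \<le> Hall_ag H S"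
  shows "ag_orientable H S \<alpha>"
proof -
  obtain a b where ab: "\<alpha> = of_int a / of_int b" "0 < b" using Rats_cases'[OF assms(1)] by metis
  define q where "q = nat b"
  have "q > 0" and \<alpha>: "\<alpha> = real_of_int a / real q" using ab unfolding q_def by auto
  define d where "d v = nat (a - int q * int (dist_to_class H S v))" for v
  have ratio: "\<And>U. U \<subseteq> ag_vertices (length S) \<Longrightarrow> finite U \<Longrightarrow> U \<noteq> {} \<Longrightarrow>
                  real_of_int a / real q \<le> hall_ratio H S U"
    using assms(2) unfolding le_Hall_ag_iff \<alpha> by blast
  have demand: "(\<Sum>u\<in>U. d u) \<le> q * card (edges_of (length S) U)"
    if "U \<subseteq> ag_vertices (length S)" "finite U" for U
    unfolding d_def by (rule sum_demand_le_card_edges_of[OF \<open>q > 0\<close> ratio that])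
  obtain ori where ori: "\<forall>v\<in>ag_vertices (length S). real (d v) / real q \<le> indegree (length S) ori v"
    using exists_orientation_indegree_ge_demand[OF \<open>q > 0\<close> demand] by blast
  have "\<alpha> - real (dist_to_class H S v) \<le> indegree (length S) ori v" if "v \<in> ag_vertices (length S)" for v
  proof -
    have "\<alpha> - real (dist_to_class H S v) = real_of_int (a - int q * int (dist_to_class H S v)) / q"
      using \<open>q > 0\<close> unfolding \<alpha> by (simp add: field_simps)
    also have "\<dots> \<le> real (d v) / q"
      unfolding d_def by (intro divide_right_mono of_int_le_real_nat) simp
    also have "\<dots> \<le> indegree (length S) ori v" using ori that by blast
    finally show ?thesis .
  qed
  thus ?thesis unfolding ag_orientable_def by blast
qed

theorem propositionF1:
  fixes H :: "('x \<Rightarrow> 'y) set" and S :: "'x list"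
  assumes "H \<noteq> {}"
  shows "(\<forall>\<alpha>. ag_orientable H S \<alpha> \<longrightarrow> \<alpha> \<le> Hall_ag H S)
       \<and> (\<forall>b. (\<forall>\<alpha>. ag_orientable H S \<alpha> \<longrightarrow> \<alpha> \<le> b) \<longrightarrow> Hall_ag H S \<le> b)"
proof (intro conjI allI impI)
  fix \<alpha> assume "ag_orientable H S \<alpha>"
  thus "\<alpha> \<le> Hall_ag H S" by (rule ag_orientable_le_Hall_ag)
next
  fix b assume bound: "\<forall>\<alpha>. ag_orientable H S \<alpha> \<longrightarrow> \<alpha> \<le> b"
  show "Hall_ag H S \<le> b"
  proof (rule ccontr)
    assume "\<not> Hall_ag H S \<le> b"
    then obtain r where r: "r \<in> \<rat>" "b < r" "r < Hall_ag H S"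
      using Rats_dense_in_real[of b "Hall_ag H S"] by auto
    hence "ag_orientable H S r" by (intro ag_orientable_if_rational_le_Hall_ag) auto
    thus False using bound r(2) by auto
  qed
qed

end
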